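(* Let $n\ge2$, let $w = l_1\cdots l_k$ be a word in $\mathbb{F}_n^+$ of length $k\ge2$, let $0\le\delta<1$, and let $z_1,\dots,z_{k+1}\in\delta{\mathbb{B}}_n$, $z_i = (z_{i1},\dots,z_{in})$. Let $\rho_{Z,w}$ be the completely contractive representation of ${\mathfrak{A}}_n\times_\phi{\mathbb{Z}}^+$ into $(k+1)\times(k+1)$ matrices determined by $\rho_{Z,w}(U)=0$ and \[ \rho_{Z,w}(S_j) = \operatorname{diag}(z_{ij})_{i=1}^{k+1} + (1-\delta)\sum_{i:\, l_i = j} E_{i,i+1},\qquad 1\le j\le n. \] Then $\rho_{Z,w}(S_w)_{1,k+1} = (1-\delta)^k$ and $\rho_{Z,w}(S_v)_{1,k+1} = 0$ for all other words $v$ with $|v|\le k$. For each word $v$ with $|v|>k$ there is an analytic function $F_v$ on $(\delta{\mathbb{B}}_n)^{k+1}$ with $F_v(0)=0$ such that $\rho_{Z,w}(S_v)_{1,k+1} = F_v(z_1,\dots,z_{k+1})$ for all such choices of $z_1,\dots,z_{k+1}$. Moreover, if the coordinates $\{z_{ij}: 1\le i\le k+1,\ 1\le j\le n\}$ are all distinct, then the range of $\rho_{Z,w}$ is all of ${\mathfrak{T}}_{k+1}$, so that $\rho_{Z,w}\in{\mathcal{N}}_{Z,k+1}$.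
   Context: ${\mathfrak{A}}_n$ is the non-commutative disc algebra generated by the left creation operators $S_1,\dots,S_n$ on full Fock space; for a word $v = j_1\cdots j_m\in\mathbb{F}_n^+$ (free semigroup on $n$ letters) $S_v = S_{j_1}\cdots S_{j_m}$. $\phi$ is an isometric automorphism of ${\mathfrak{A}}_n$ and ${\mathfrak{A}}_n\times_\phi{\mathbb{Z}}^+$ is the universal operator algebra generated by ${\mathfrak{A}}_n$ and a contraction $U$ with $AU=U\phi(A)$; since the row $[\rho_{Z,w}(S_1)\ \cdots\ \rho_{Z,w}(S_n)]$ has norm $<1$, the formulas determine a completely contractive representation. $E_{i,i+1}$ are matrix units and ${\mathfrak{T}}_{k+1}$ is the algebra of upper triangular $(k+1)\times(k+1)$ matrices. For $z\in{\mathbb{B}}_n$, $\theta_{z,0}$ is the character of ${\mathfrak{A}}_n\times_\phi{\mathbb{Z}}^+$ with $\theta_{z,0}(S_i) = z_i$ and $\theta_{z,0}(U)=0$. A nest representation of size $m$ is a representation onto ${\mathfrak{T}}_m$, with diagonal characters $\theta_{\pi,i}(A)=\langle\pi(A)\xi_i,\xi_i\rangle$; for $Z=(z_1,z_2,\dots)$, ${\mathcal{N}}_{Z,m}$ is the set of $m\times m$ nest representations $\pi$ with $\theta_{\pi,i}=\theta_{z_i,0}$, $1\le i\le m$. *)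

theory Defs
  imports "HOL-Analysis.Analysis"
begin

text \<open>Matrices of size m are modelled as functions nat => nat => complex,
  only the entries with indices in {1..m} being relevant.
  Words in the free semigroup on n letters are lists over {1..n}.
  A tuple Z = (z_1,...,z_{k+1}) of points of C^n is a function z with
  z i j = z_{ij}.\<close>

type_synonym cmat = "nat \<Rightarrow> nat \<Rightarrow> complex"

definition mat_one :: cmat where
  "mat_one i j = (if i = j then 1 else 0)"

definition mat_mul :: "nat \<Rightarrow> cmat \<Rightarrow> cmat \<Rightarrow> cmat" where
  "mat_mul m A B i j = (\<Sum>l = 1..m. A i l * B l j)"

definition word_mat :: "nat \<Rightarrow> (nat \<Rightarrow> cmat) \<Rightarrow> nat list \<Rightarrow> cmat" where
  "word_mat m A v = foldr (\<lambda>j M. mat_mul m (A j) M) v mat_one"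

definition rho_S :: "real \<Rightarrow> (nat \<Rightarrow> nat \<Rightarrow> complex) \<Rightarrow> nat list \<Rightarrow> nat \<Rightarrow> cmat" where
  "rho_S \<delta> z w j r c =
     (if r = c then z r j else 0)
     + (if c = r + 1 \<and> 1 \<le> r \<and> r \<le> length w \<and> w ! (r - 1) = j
        then complex_of_real (1 - \<delta>) else 0)"

definition rho_word :: "real \<Rightarrow> (nat \<Rightarrow> nat \<Rightarrow> complex) \<Rightarrow> nat list \<Rightarrow> nat list \<Rightarrow> cmat" where
  "rho_word \<delta> z w v = word_mat (length w + 1) (rho_S \<delta> z w) v"

definition in_scaled_ball :: "real \<Rightarrow> nat \<Rightarrow> (nat \<Rightarrow> complex) \<Rightarrow> bool" where
  "in_scaled_ball \<delta> n x \<longleftrightarrow>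
     (\<exists>y. (\<Sum>j = 1..n. (cmod (y j))\<^sup>2) < 1 \<and> (\<forall>j \<in> {1..n}. x j = complex_of_real \<delta> * y j))"

definition scaled_polyball :: "real \<Rightarrow> nat \<Rightarrow> nat \<Rightarrow> (nat \<Rightarrow> nat \<Rightarrow> complex) set" where
  "scaled_polyball \<delta> n m = {z. \<forall>i \<in> {1..m}. in_scaled_ball \<delta> n (z i)}"

text \<open>Analyticity in the finitely many complex variables z_{ij}, (i,j) in I, on D:
  near every point a of D, F is the sum of an (unconditionally, i.e. absolutely)
  convergent power series in the variables (z_{ij} - a_{ij}), (i,j) in I.\<close>
definition analytic_several ::
  "(nat \<times> nat) set \<Rightarrow> (nat \<Rightarrow> nat \<Rightarrow> complex) set \<Rightarrow> ((nat \<Rightarrow> nat \<Rightarrow> complex) \<Rightarrow> complex) \<Rightarrow> bool" where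
  "analytic_several I D F \<longleftrightarrow>
     (\<forall>a \<in> D. \<exists>e > 0. \<exists>c :: ((nat \<times> nat) \<Rightarrow> nat) \<Rightarrow> complex.
        \<forall>z \<in> D. (\<forall>x \<in> I. cmod (z (fst x) (snd x) - a (fst x) (snd x)) < e) \<longrightarrow>
          ((\<lambda>\<alpha>. c \<alpha> * (\<Prod>x \<in> I. (z (fst x) (snd x) - a (fst x) (snd x)) ^ \<alpha> x))
             has_sum F z) {\<alpha>. \<forall>x. x \<notin> I \<longrightarrow> \<alpha> x = 0})"

definition upper_tri :: "nat \<Rightarrow> cmat \<Rightarrow> bool" where
  "upper_tri m M \<longleftrightarrow> (\<forall>i \<in> {1..m}. \<forall>j \<in> {1..m}. j < i \<longrightarrow> M i j = 0)"

text \<open>M (restricted to indices {1..m}) lies in the range of rho_{Z,w}: since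
  rho(U) = 0 and we are in finite dimensions, this range is the linear span of the
  rho(S_v), v ranging over all words (including the empty word, giving I).\<close>
definition in_rho_range :: "real \<Rightarrow> (nat \<Rightarrow> nat \<Rightarrow> complex) \<Rightarrow> nat \<Rightarrow> nat list \<Rightarrow> cmat \<Rightarrow> bool" where
  "in_rho_range \<delta> z n w M \<longleftrightarrow>
     (\<exists>V c. finite V \<and> (\<forall>v \<in> V. set v \<subseteq> {1..n}) \<and>
        (\<forall>i \<in> {1..length w + 1}. \<forall>j \<in> {1..length w + 1}.
           M i j = (\<Sum>v \<in> V. c v * rho_word \<delta> z w v i j)))"

end

theory Submission
  imports Defs
begin

text \<open>Each \<open>\<rho>(S\<^sub>j)\<close> is diagonal plus a weighted superdiagonal, so \<open>\<rho>(S\<^sub>v)\<close> is upper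
  triangular with band width \<open>|v|\<close>, and its \<open>|v|\<close>-th superdiagonal is a single product of
  superdiagonal weights, which survives at row \<open>r\<close> exactly when \<open>v\<close> is the subword of \<open>w\<close>
  starting at \<open>r\<close>. This gives the corner entries of short words. Every entry is a polynomial in
  the \<open>z\<^sub>i\<^sub>j\<close>, hence analytic, and at \<open>Z = 0\<close> only the \<open>|v|\<close>-th superdiagonal survives.
  For surjectivity, when the coordinates are distinct, multiplying \<open>\<rho>(S\<^sub>u)\<close> by factors
  \<open>\<rho>(S\<^sub>j) - z\<^sub>l\<^sub>j\<close> with \<open>j \<noteq> w\<^sub>r\<close> resp. \<open>j \<noteq> w\<^sub>c\<^sub>-\<^sub>1\<close> clears all rows below \<open>r\<close> and all
  columns left of \<open>c\<close> without killing the \<open>(r, c)\<close> entry; the remaining entries lie further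
  from the diagonal, so the matrix units are obtained by downward induction on \<open>c - r\<close>.\<close>

section \<open>Matrix arithmetic\<close>

lemma mat_mul_assoc: "mat_mul m (mat_mul m A B) C i j = mat_mul m A (mat_mul m B C) i j"
  unfolding mat_mul_def
  by (simp add: sum_distrib_left sum_distrib_right mult.assoc) (rule sum.swap)

lemma mat_mul_one_left:
  assumes "i \<in> {1..m}"
  shows "mat_mul m mat_one B i j = B i j"
proof -
  have "mat_mul m mat_one B i j = (\<Sum>l\<in>{1..m}. if i = l then B l j else 0)"
    unfolding mat_mul_def mat_one_def by (intro sum.cong) auto
  then show ?thesis using assms by (simp add: sum.delta)
qed

lemma mat_mul_one_right:
  assumes "j \<in> {1..m}"
  shows "mat_mul m A mat_one i j = A i j"
proof -
  have "mat_mul m A mat_one i j = (\<Sum>l\<in>{1..m}. if l = j then A i l else 0)"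
    unfolding mat_mul_def mat_one_def by (intro sum.cong) auto
  then show ?thesis using assms by (simp add: sum.delta')
qed

lemma mat_mul_cong_right:
  "(\<And>l. l \<in> {1..m} \<Longrightarrow> B l j = B' l j) \<Longrightarrow> mat_mul m A B i j = mat_mul m A B' i j"
  unfolding mat_mul_def by (intro sum.cong) auto

lemma upper_tri_mat_one: "upper_tri m mat_one"
  by (simp add: upper_tri_def mat_one_def)

lemma upper_tri_mat_mul:
  assumes "upper_tri m A" "upper_tri m B"
  shows "upper_tri m (mat_mul m A B)"
  unfolding upper_tri_def mat_mul_def
proof (intro ballI impI sum.neutral)
  fix i j l assume ij: "i \<in> {1..m}" "j \<in> {1..m}" "j < i" and l: "l \<in> {1..m}"
  show "A i l * B l j = 0"
  proof (cases "l < i")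
    case True then show ?thesis using assms(1) ij l unfolding upper_tri_def by simp
  next
    case False then show ?thesis using assms(2) ij l unfolding upper_tri_def by simp
  qed
qed

lemma word_mat_Cons: "word_mat m A (j # v) = mat_mul m (A j) (word_mat m A v)"
  by (simp add: word_mat_def)

lemma word_mat_append:
  "i \<in> {1..m} \<Longrightarrow> word_mat m A (u @ v) i j = mat_mul m (word_mat m A u) (word_mat m A v) i j"
proof (induction u arbitrary: i)
  case Nil then show ?case by (simp add: word_mat_def mat_mul_one_left)
next
  case (Cons a u)
  have "word_mat m A ((a # u) @ v) i j = mat_mul m (A a) (mat_mul m (word_mat m A u) (word_mat m A v)) i j"
    unfolding append_Cons word_mat_Cons by (intro mat_mul_cong_right Cons.IH)
  then show ?case by (simp add: word_mat_Cons mat_mul_assoc)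
qed

lemma word_mat_snoc:
  assumes "i \<in> {1..m}" "j \<in> {1..m}"
  shows "word_mat m A (v @ [a]) i j = mat_mul m (word_mat m A v) (A a) i j"
proof -
  have "word_mat m A (v @ [a]) i j = mat_mul m (word_mat m A v) (word_mat m A [a]) i j"
    using assms(1) by (rule word_mat_append)
  also have "\<dots> = mat_mul m (word_mat m A v) (A a) i j"
    using assms(2) by (intro mat_mul_cong_right) (simp add: word_mat_def mat_mul_one_right)
  finally show ?thesis .
qed

lemma upper_tri_word_mat: "(\<And>j. upper_tri m (A j)) \<Longrightarrow> upper_tri m (word_mat m A v)"
  by (induction v) (simp_all add: word_mat_def upper_tri_mat_one upper_tri_mat_mul)

lemma mat_mul_row_diagonal:
  assumes "r \<in> {1..m}" "\<And>l. l \<in> {1..m} \<Longrightarrow> l \<noteq> r \<Longrightarrow> A r l = 0"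
  shows "mat_mul m A M r b = A r r * M r b"
  unfolding mat_mul_def using assms by (subst sum.remove[of _ r]) (auto intro!: sum.neutral)

lemma mat_mul_col_diagonal:
  assumes "c \<in> {1..m}" "\<And>l. l \<in> {1..m} \<Longrightarrow> l \<noteq> c \<Longrightarrow> A l c = 0"
  shows "mat_mul m M A a c = M a c * A c c"
  unfolding mat_mul_def using assms by (subst sum.remove[of _ c]) (auto intro!: sum.neutral)

lemma mat_mul_upper_tri_rows:
  assumes "upper_tri m A" "1 \<le> t" "t \<le> a" "a \<le> m"
    and "\<And>l. t < l \<Longrightarrow> l \<le> m \<Longrightarrow> M l b = 0"
  shows "mat_mul m A M a b = (if a = t then A t t * M t b else 0)"
proof -
  have "A a l * M l b = 0" if "l \<in> {1..m} - {a}" for l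
    using assms that unfolding upper_tri_def by (cases "l < a") auto
  then have "(\<Sum>l\<in>{1..m} - {a}. A a l * M l b) = 0" by (blast intro: sum.neutral)
  then have "mat_mul m A M a b = A a a * M a b"
    unfolding mat_mul_def using assms by (subst sum.remove[of _ a]) auto
  then show ?thesis using assms by auto
qed

lemma mat_mul_upper_tri_cols:
  assumes "upper_tri m A" "1 \<le> b" "b \<le> s" "s \<le> m"
    and "\<And>l. 1 \<le> l \<Longrightarrow> l < s \<Longrightarrow> M a l = 0"
  shows "mat_mul m M A a b = (if b = s then M a s * A s s else 0)"
proof -
  have "M a l * A l b = 0" if "l \<in> {1..m} - {b}" for l
    using assms that unfolding upper_tri_def by (cases "b < l") auto
  then have "(\<Sum>l\<in>{1..m} - {b}. M a l * A l b) = 0" by (blast intro: sum.neutral)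
  then have "mat_mul m M A a b = M a b * A b b"
    unfolding mat_mul_def using assms by (subst sum.remove[of _ b]) auto
  then show ?thesis using assms by auto
qed

section \<open>Products of shifted factors\<close>

text \<open>\<open>mul_shifts_left m A [d\<^sub>1, \<dots>, d\<^sub>k] N = (A - d\<^sub>1) \<cdots> (A - d\<^sub>k) N\<close> and
  \<open>mul_shifts_right m A [d\<^sub>1, \<dots>, d\<^sub>k] N = N (A - d\<^sub>k) \<cdots> (A - d\<^sub>1)\<close>.\<close>

definition mul_shifts_left :: "nat \<Rightarrow> cmat \<Rightarrow> complex list \<Rightarrow> cmat \<Rightarrow> cmat" where
  "mul_shifts_left m A ds N = foldr (\<lambda>d M a b. mat_mul m A M a b - d * M a b) ds N"

definition mul_shifts_right :: "nat \<Rightarrow> cmat \<Rightarrow> complex list \<Rightarrow> cmat \<Rightarrow> cmat" where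
  "mul_shifts_right m A ds N = foldr (\<lambda>d M a b. mat_mul m M A a b - d * M a b) ds N"

lemma mul_shifts_left_Nil [simp]: "mul_shifts_left m A [] N = N"
  and mul_shifts_left_Cons [simp]: "mul_shifts_left m A (d # ds) N =
    (\<lambda>a b. mat_mul m A (mul_shifts_left m A ds N) a b - d * mul_shifts_left m A ds N a b)"
  by (simp_all add: mul_shifts_left_def)

lemma mul_shifts_right_Nil [simp]: "mul_shifts_right m A [] N = N"
  and mul_shifts_right_Cons [simp]: "mul_shifts_right m A (d # ds) N =
    (\<lambda>a b. mat_mul m (mul_shifts_right m A ds N) A a b - d * mul_shifts_right m A ds N a b)"
  by (simp_all add: mul_shifts_right_def)

lemma mul_shifts_left_row_diagonal:
  assumes "r \<in> {1..m}" "\<And>l. l \<in> {1..m} \<Longrightarrow> l \<noteq> r \<Longrightarrow> A r l = 0"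
  shows "mul_shifts_left m A ds N r b = (\<Prod>d\<leftarrow>ds. A r r - d) * N r b"
proof -
  have "mat_mul m A M r b = A r r * M r b" for M
    by (rule mat_mul_row_diagonal) (use assms in auto)
  then show ?thesis by (induction ds) (simp_all add: algebra_simps)
qed

lemma mul_shifts_right_col_diagonal:
  assumes "c \<in> {1..m}" "\<And>l. l \<in> {1..m} \<Longrightarrow> l \<noteq> c \<Longrightarrow> A l c = 0"
  shows "mul_shifts_right m A ds N a c = (\<Prod>d\<leftarrow>ds. A c c - d) * N a c"
proof -
  have "mat_mul m M A a c = M a c * A c c" for M
    by (rule mat_mul_col_diagonal) (use assms in auto)
  then show ?thesis by (induction ds) (simp_all add: algebra_simps)
qed

lemma mul_shifts_right_zero_row:
  assumes "\<And>b. N a b = 0"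
  shows "mul_shifts_right m A ds N a b = 0"
  by (induction ds arbitrary: b) (simp_all add: mat_mul_def assms)

text \<open>Cayley--Hamilton for the lower right block of an upper triangular matrix.\<close>
lemma mul_shifts_left_diag_rows_zero:
  assumes "upper_tri m A" "1 \<le> t" "t \<le> a" "a \<le> m"
  shows "mul_shifts_left m A (map (\<lambda>l. A l l) [t..<Suc m]) N a b = 0"
proof -
  have "t \<le> Suc m" using assms by simp
  then have "\<forall>a. t \<le> a \<longrightarrow> a \<le> m \<longrightarrow> mul_shifts_left m A (map (\<lambda>l. A l l) [t..<Suc m]) N a b = 0"
    using assms(2)
  proof (induction t rule: inc_induct)
    case base then show ?case by simp
  next
    case (step t)
    let ?N = "mul_shifts_left m A (map (\<lambda>l. A l l) [Suc t..<Suc m]) N"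
    have rows: "mat_mul m A ?N a b = (if a = t then A t t * ?N t b else 0)" if "t \<le> a" "a \<le> m" for a
      using step that by (intro mat_mul_upper_tri_rows[OF assms(1)]) auto
    have "[t..<Suc m] = t # [Suc t..<Suc m]"
      using step.hyps by (simp add: upt_conv_Cons del: upt_Suc)
    then show ?case
      using rows step.IH by (auto simp del: upt_Suc)
  qed
  then show ?thesis using assms by blast
qed

lemma mul_shifts_right_diag_cols_zero:
  assumes "upper_tri m A" "1 \<le> b" "b \<le> s" "s \<le> m"
  shows "mul_shifts_right m A (map (\<lambda>l. A l l) (rev [1..<Suc s])) N a b = 0"
  using assms(2-4)
proof (induction s arbitrary: b)
  case 0 then show ?case by simp
next
  case (Suc s)
  let ?N = "mul_shifts_right m A (map (\<lambda>l. A l l) (rev [1..<Suc s])) N"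
  have "mat_mul m ?N A a b = (if b = Suc s then ?N a (Suc s) * A (Suc s) (Suc s) else 0)"
    using Suc by (intro mat_mul_upper_tri_cols[OF assms(1)]) auto
  moreover have "b \<noteq> Suc s \<Longrightarrow> ?N a b = 0" using Suc by simp
  ultimately show ?case by simp
qed

definition clear_to_corner :: "nat \<Rightarrow> cmat \<Rightarrow> cmat \<Rightarrow> nat \<Rightarrow> nat \<Rightarrow> cmat \<Rightarrow> cmat" where
  "clear_to_corner m A B r c N = mul_shifts_right m B (map (\<lambda>l. B l l) (rev [1..<c]))
     (mul_shifts_left m A (map (\<lambda>l. A l l) [Suc r..<Suc m]) N)"

lemma clear_to_corner_entry:
  assumes "r \<in> {1..m}" "c \<in> {1..m}"
    and "\<And>l. l \<in> {1..m} \<Longrightarrow> l \<noteq> r \<Longrightarrow> A r l = 0" "\<And>l. l \<in> {1..m} \<Longrightarrow> l \<noteq> c \<Longrightarrow> B l c = 0"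
  shows "clear_to_corner m A B r c N r c =
    (\<Prod>l\<leftarrow>rev [1..<c]. B c c - B l l) * (\<Prod>l\<leftarrow>[Suc r..<Suc m]. A r r - A l l) * N r c"
proof -
  let ?Y = "mul_shifts_left m A (map (\<lambda>l. A l l) [Suc r..<Suc m]) N"
  have "clear_to_corner m A B r c N r c = (\<Prod>d\<leftarrow>map (\<lambda>l. B l l) (rev [1..<c]). B c c - d) * ?Y r c"
    unfolding clear_to_corner_def by (rule mul_shifts_right_col_diagonal) (use assms in auto)
  moreover have "?Y r c = (\<Prod>d\<leftarrow>map (\<lambda>l. A l l) [Suc r..<Suc m]. A r r - d) * N r c"
    by (rule mul_shifts_left_row_diagonal) (use assms in auto)
  ultimately show ?thesis by (simp add: comp_def del: upt_Suc)
qed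

lemma clear_to_corner_outside:
  assumes "upper_tri m A" "upper_tri m B" "1 \<le> r" "c \<le> m"
    and "a \<in> {1..m}" "b \<in> {1..m}" "\<not> (a \<le> r \<and> c \<le> b)"
  shows "clear_to_corner m A B r c N a b = 0"
proof (cases "r < a")
  case True
  then have "mul_shifts_left m A (map (\<lambda>l. A l l) [Suc r..<Suc m]) N a b' = 0" for b'
    using assms by (intro mul_shifts_left_diag_rows_zero) auto
  then show ?thesis unfolding clear_to_corner_def by (rule mul_shifts_right_zero_row)
next
  case False
  then have "rev [1..<c] = rev [1..<Suc (c - 1)]" "b \<le> c - 1" using assms by auto
  then show ?thesis
    unfolding clear_to_corner_def using assms
    by (simp only:) (intro mul_shifts_right_diag_cols_zero, auto)
qed

section \<open>Entries of the representation\<close>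

lemma rho_S_diag [simp]: "rho_S \<delta> z w j i i = z i j"
  by (simp add: rho_S_def)

lemma upper_tri_rho_S: "upper_tri (length w + 1) (rho_S \<delta> z w j)"
  by (simp add: upper_tri_def rho_S_def)

lemma rho_S_row_off_diag:
  "w ! (r - 1) \<noteq> j \<Longrightarrow> l \<noteq> r \<Longrightarrow> rho_S \<delta> z w j r l = 0"
  by (simp add: rho_S_def)

lemma rho_S_col_off_diag:
  "w ! (c - 2) \<noteq> j \<Longrightarrow> l \<noteq> c \<Longrightarrow> rho_S \<delta> z w j l c = 0"
  by (auto simp: rho_S_def)

lemma rho_word_Nil: "rho_word \<delta> z w [] = mat_one"
  by (simp add: rho_word_def word_mat_def)

lemma rho_word_Cons: "rho_word \<delta> z w (j # v) = mat_mul (length w + 1) (rho_S \<delta> z w j) (rho_word \<delta> z w v)"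
  by (simp add: rho_word_def word_mat_def)

lemma rho_word_Cons_entry:
  assumes "r \<in> {1..length w + 1}"
  shows "rho_word \<delta> z w (j # v) r b = z r j * rho_word \<delta> z w v r b +
    (if r \<le> length w \<and> w ! (r - 1) = j then of_real (1 - \<delta>) * rho_word \<delta> z w v (Suc r) b else 0)"
proof -
  let ?P = "r \<le> length w \<and> w ! (r - 1) = j"
  have "rho_word \<delta> z w (j # v) r b = (\<Sum>l\<in>{1..length w + 1}.
      (if l = r then z r j * rho_word \<delta> z w v l b else 0)
    + (if l = Suc r then (if ?P then of_real (1 - \<delta>) * rho_word \<delta> z w v l b else 0) else 0))"
    unfolding rho_word_Cons mat_mul_def rho_S_def using assms
    by (intro sum.cong) (auto simp: distrib_right)
  also have "\<dots> = z r j * rho_word \<delta> z w v r b +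
    (if ?P then of_real (1 - \<delta>) * rho_word \<delta> z w v (Suc r) b else 0)"
    using assms by (auto simp: sum.distrib sum.delta le_Suc_eq)
  finally show ?thesis .
qed

lemma upper_tri_rho_word: "upper_tri (length w + 1) (rho_word \<delta> z w v)"
  unfolding rho_word_def by (rule upper_tri_word_mat[OF upper_tri_rho_S])

lemma rho_word_entry_beyond_band:
  "r \<in> {1..length w + 1} \<Longrightarrow> r + length v < c \<Longrightarrow> rho_word \<delta> z w v r c = 0"
  by (induction v arbitrary: r) (simp_all add: rho_word_Nil mat_one_def rho_word_Cons_entry)

lemma rho_word_entry_at_zero:
  "r \<in> {1..length w + 1} \<Longrightarrow> c \<noteq> r + length v \<Longrightarrow> rho_word \<delta> (\<lambda>_ _. 0) w v r c = 0"
  by (induction v arbitrary: r) (simp_all add: rho_word_Nil mat_one_def rho_word_Cons_entry)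

lemma rho_word_entry_band_edge:
  "1 \<le> r \<Longrightarrow> r + length v \<le> length w + 1 \<Longrightarrow>
   rho_word \<delta> z w v r (r + length v) =
     (if \<forall>i<length v. w ! (r - 1 + i) = v ! i then of_real (1 - \<delta>) ^ length v else 0)"
proof (induction v arbitrary: r)
  case Nil then show ?case by (simp add: rho_word_Nil mat_one_def)
next
  case (Cons j v)
  have beyond: "rho_word \<delta> z w v r (r + length (j # v)) = 0"
    using Cons.prems by (intro rho_word_entry_beyond_band) auto
  have edge: "rho_word \<delta> z w v (Suc r) (Suc r + length v) =
     (if \<forall>i<length v. w ! (Suc r - 1 + i) = v ! i then of_real (1 - \<delta>) ^ length v else 0)"
    using Cons.prems by (intro Cons.IH) auto
  have match: "(\<forall>i<length (j # v). w ! (r - 1 + i) = (j # v) ! i) \<longleftrightarrow>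
      w ! (r - 1) = j \<and> (\<forall>i<length v. w ! (Suc r - 1 + i) = v ! i)"
    using Cons.prems by (simp add: All_less_Suc2)
  have "rho_word \<delta> z w (j # v) r (r + length (j # v)) =
     z r j * rho_word \<delta> z w v r (r + length (j # v)) +
     (if r \<le> length w \<and> w ! (r - 1) = j
      then of_real (1 - \<delta>) * rho_word \<delta> z w v (Suc r) (Suc r + length v) else 0)"
    using Cons.prems by (subst rho_word_Cons_entry) auto
  then show ?case unfolding beyond edge match using Cons.prems by auto
qed

lemma rho_word_corner_short:
  assumes "length v \<le> length w"
  shows "rho_word \<delta> z w v 1 (length w + 1) = (if v = w then of_real (1 - \<delta>) ^ length w else 0)"
proof (cases "length v = length w")
  case True
  have "(\<forall>i<length v. w ! i = v ! i) \<longleftrightarrow> v = w"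
    using True by (auto intro: nth_equalityI)
  then show ?thesis
    using rho_word_entry_band_edge[of 1 v w \<delta> z] True by (simp add: add.commute)
next
  case False
  then show ?thesis using assms by (auto intro: rho_word_entry_beyond_band)
qed

lemma rho_word_snoc_entry:
  "i \<in> {1..length w + 1} \<Longrightarrow> b \<in> {1..length w + 1} \<Longrightarrow>
   rho_word \<delta> z w (v @ [j]) i b = mat_mul (length w + 1) (rho_word \<delta> z w v) (rho_S \<delta> z w j) i b"
  unfolding rho_word_def by (rule word_mat_snoc)

section \<open>The range of the representation\<close>

lemma sum_mult_sum_swap_left:
  fixes c :: "'v \<Rightarrow> 'a :: comm_semiring_0"
  shows "(\<Sum>l\<in>L. a l * (\<Sum>v\<in>V. c v * b v l)) = (\<Sum>v\<in>V. c v * (\<Sum>l\<in>L. a l * b v l))"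
  by (simp add: sum_distrib_left sum.swap[of _ L] mult.left_commute)

lemma sum_mult_sum_swap_right:
  fixes c :: "'v \<Rightarrow> 'a :: comm_semiring_0"
  shows "(\<Sum>l\<in>L. (\<Sum>v\<in>V. c v * b v l) * a l) = (\<Sum>v\<in>V. c v * (\<Sum>l\<in>L. b v l * a l))"
  by (simp add: sum_distrib_left sum_distrib_right sum.swap[of _ L] mult.assoc)

lemma in_rho_range_cong:
  "in_rho_range \<delta> z n w M \<Longrightarrow>
   (\<And>i j. i \<in> {1..length w + 1} \<Longrightarrow> j \<in> {1..length w + 1} \<Longrightarrow> M i j = N i j) \<Longrightarrow>
   in_rho_range \<delta> z n w N"
  unfolding in_rho_range_def by metis

lemma in_rho_range_zero: "in_rho_range \<delta> z n w (\<lambda>_ _. 0)"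
  unfolding in_rho_range_def by (rule exI[of _ "{}"]) auto

lemma in_rho_range_rho_word: "set v \<subseteq> {1..n} \<Longrightarrow> in_rho_range \<delta> z n w (rho_word \<delta> z w v)"
  unfolding in_rho_range_def by (intro exI[of _ "{v}"] exI[of _ "\<lambda>_. 1"]) auto

lemma in_rho_range_scale:
  assumes "in_rho_range \<delta> z n w M"
  shows "in_rho_range \<delta> z n w (\<lambda>i j. a * M i j)"
proof -
  obtain V c where "finite V" "\<forall>v\<in>V. set v \<subseteq> {1..n}"
    and "\<forall>i\<in>{1..length w + 1}. \<forall>j\<in>{1..length w + 1}. M i j = (\<Sum>v\<in>V. c v * rho_word \<delta> z w v i j)"
    using assms unfolding in_rho_range_def by blast
  then show ?thesis
    unfolding in_rho_range_def
    by (intro exI[of _ V] exI[of _ "\<lambda>v. a * c v"]) (auto simp: sum_distrib_left mult.assoc)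
qed

lemma in_rho_range_add:
  assumes "in_rho_range \<delta> z n w M" "in_rho_range \<delta> z n w N"
  shows "in_rho_range \<delta> z n w (\<lambda>i j. M i j + N i j)"
proof -
  let ?I = "{1..length w + 1}"
  obtain V1 c1 where V1: "finite V1" "\<forall>v\<in>V1. set v \<subseteq> {1..n}"
    and M: "\<forall>i\<in>?I. \<forall>j\<in>?I. M i j = (\<Sum>v\<in>V1. c1 v * rho_word \<delta> z w v i j)"
    using assms(1) unfolding in_rho_range_def by blast
  obtain V2 c2 where V2: "finite V2" "\<forall>v\<in>V2. set v \<subseteq> {1..n}"
    and N: "\<forall>i\<in>?I. \<forall>j\<in>?I. N i j = (\<Sum>v\<in>V2. c2 v * rho_word \<delta> z w v i j)"
    using assms(2) unfolding in_rho_range_def by blast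
  define c where "c v = (if v \<in> V1 then c1 v else 0) + (if v \<in> V2 then c2 v else 0)" for v
  have "(\<Sum>v\<in>V1 \<union> V2. c v * rho_word \<delta> z w v i j)
     = (\<Sum>v\<in>V1. c1 v * rho_word \<delta> z w v i j) + (\<Sum>v\<in>V2. c2 v * rho_word \<delta> z w v i j)" for i j
  proof -
    have "(\<Sum>v\<in>V1 \<union> V2. c v * rho_word \<delta> z w v i j)
      = (\<Sum>v\<in>V1 \<union> V2. if v \<in> V1 then c1 v * rho_word \<delta> z w v i j else 0)
      + (\<Sum>v\<in>V1 \<union> V2. if v \<in> V2 then c2 v * rho_word \<delta> z w v i j else 0)"
      unfolding c_def sum.distrib[symmetric] by (intro sum.cong) (auto simp: distrib_right)
    then show ?thesis
      using V1(1) V2(1) by (simp add: sum.inter_restrict[symmetric] Int_absorb1 Int_absorb2)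
  qed
  then show ?thesis
    unfolding in_rho_range_def using V1 V2 M N by (intro exI[of _ "V1 \<union> V2"] exI[of _ c]) auto
qed

lemma in_rho_range_sum:
  "finite A \<Longrightarrow> (\<And>x. x \<in> A \<Longrightarrow> in_rho_range \<delta> z n w (f x)) \<Longrightarrow>
   in_rho_range \<delta> z n w (\<lambda>i j. \<Sum>x\<in>A. f x i j)"
proof (induction A rule: finite_induct)
  case empty then show ?case by (simp add: in_rho_range_zero)
next
  case (insert x F)
  then have "in_rho_range \<delta> z n w (\<lambda>i j. f x i j + (\<Sum>x\<in>F. f x i j))"
    by (intro in_rho_range_add) auto
  then show ?case using insert by simp
qed

lemma in_rho_range_mult_left:
  assumes "j \<in> {1..n}" "in_rho_range \<delta> z n w M"
  shows "in_rho_range \<delta> z n w (mat_mul (length w + 1) (rho_S \<delta> z w j) M)"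
proof -
  let ?I = "{1..length w + 1}"
  obtain V c where V: "finite V" "\<forall>v\<in>V. set v \<subseteq> {1..n}"
    and M: "\<forall>i\<in>?I. \<forall>b\<in>?I. M i b = (\<Sum>v\<in>V. c v * rho_word \<delta> z w v i b)"
    using assms(2) unfolding in_rho_range_def by blast
  have "mat_mul (length w + 1) (rho_S \<delta> z w j) M a b = (\<Sum>v\<in>Cons j ` V. c (tl v) * rho_word \<delta> z w v a b)"
    if "b \<in> ?I" for a b
  proof -
    have "mat_mul (length w + 1) (rho_S \<delta> z w j) M a b
      = (\<Sum>l\<in>?I. rho_S \<delta> z w j a l * (\<Sum>v\<in>V. c v * rho_word \<delta> z w v l b))"
      unfolding mat_mul_def using M that by (intro sum.cong) auto
    also have "\<dots> = (\<Sum>v\<in>V. c v * rho_word \<delta> z w (j # v) a b)"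
      unfolding rho_word_Cons mat_mul_def by (rule sum_mult_sum_swap_left)
    also have "\<dots> = (\<Sum>v\<in>Cons j ` V. c (tl v) * rho_word \<delta> z w v a b)"
      by (simp add: sum.reindex)
    finally show ?thesis .
  qed
  then show ?thesis
    unfolding in_rho_range_def using V assms(1)
    by (intro exI[of _ "Cons j ` V"] exI[of _ "c \<circ> tl"]) auto
qed

lemma in_rho_range_mult_right:
  assumes "j \<in> {1..n}" "in_rho_range \<delta> z n w M"
  shows "in_rho_range \<delta> z n w (mat_mul (length w + 1) M (rho_S \<delta> z w j))"
proof -
  let ?I = "{1..length w + 1}"
  obtain V c where V: "finite V" "\<forall>v\<in>V. set v \<subseteq> {1..n}"
    and M: "\<forall>a\<in>?I. \<forall>l\<in>?I. M a l = (\<Sum>v\<in>V. c v * rho_word \<delta> z w v a l)"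
    using assms(2) unfolding in_rho_range_def by blast
  have "mat_mul (length w + 1) M (rho_S \<delta> z w j) a b
     = (\<Sum>v\<in>(\<lambda>v. v @ [j]) ` V. c (butlast v) * rho_word \<delta> z w v a b)"
    if "a \<in> ?I" "b \<in> ?I" for a b
  proof -
    have "mat_mul (length w + 1) M (rho_S \<delta> z w j) a b
      = (\<Sum>l\<in>?I. (\<Sum>v\<in>V. c v * rho_word \<delta> z w v a l) * rho_S \<delta> z w j l b)"
      unfolding mat_mul_def using M that by (intro sum.cong) auto
    also have "\<dots> = (\<Sum>v\<in>V. c v * mat_mul (length w + 1) (rho_word \<delta> z w v) (rho_S \<delta> z w j) a b)"
      unfolding mat_mul_def by (rule sum_mult_sum_swap_right)
    also have "\<dots> = (\<Sum>v\<in>V. c v * rho_word \<delta> z w (v @ [j]) a b)"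
      using that by (simp add: rho_word_snoc_entry)
    also have "\<dots> = (\<Sum>v\<in>(\<lambda>v. v @ [j]) ` V. c (butlast v) * rho_word \<delta> z w v a b)"
      by (simp add: sum.reindex inj_on_def)
    finally show ?thesis .
  qed
  then show ?thesis
    unfolding in_rho_range_def using V assms(1)
    by (intro exI[of _ "(\<lambda>v. v @ [j]) ` V"] exI[of _ "c \<circ> butlast"]) auto
qed

lemma in_rho_range_mul_shifts_left:
  "j \<in> {1..n} \<Longrightarrow> in_rho_range \<delta> z n w M \<Longrightarrow>
   in_rho_range \<delta> z n w (mul_shifts_left (length w + 1) (rho_S \<delta> z w j) ds M)"
proof (induction ds)
  case (Cons d ds)
  then have "in_rho_range \<delta> z n w (\<lambda>a b.
      mat_mul (length w + 1) (rho_S \<delta> z w j) (mul_shifts_left (length w + 1) (rho_S \<delta> z w j) ds M) a b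
      + (- d) * mul_shifts_left (length w + 1) (rho_S \<delta> z w j) ds M a b)"
    by (intro in_rho_range_add in_rho_range_mult_left in_rho_range_scale) auto
  then show ?case by simp
qed simp

lemma in_rho_range_mul_shifts_right:
  "j \<in> {1..n} \<Longrightarrow> in_rho_range \<delta> z n w M \<Longrightarrow>
   in_rho_range \<delta> z n w (mul_shifts_right (length w + 1) (rho_S \<delta> z w j) ds M)"
proof (induction ds)
  case (Cons d ds)
  then have "in_rho_range \<delta> z n w (\<lambda>a b.
      mat_mul (length w + 1) (mul_shifts_right (length w + 1) (rho_S \<delta> z w j) ds M) (rho_S \<delta> z w j) a b
      + (- d) * mul_shifts_right (length w + 1) (rho_S \<delta> z w j) ds M a b)"
    by (intro in_rho_range_add in_rho_range_mult_right in_rho_range_scale) auto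
  then show ?case by simp
qed simp

lemma upper_tri_if_in_rho_range:
  assumes "in_rho_range \<delta> z n w M"
  shows "upper_tri (length w + 1) M"
proof -
  have "rho_word \<delta> z w v i j = 0" if "i \<in> {1..length w + 1}" "j \<in> {1..length w + 1}" "j < i" for v i j
    using upper_tri_rho_word that unfolding upper_tri_def by blast
  then show ?thesis
    using assms unfolding in_rho_range_def upper_tri_def by (auto intro!: sum.neutral)
qed

lemma prod_list_coord_diff_nonzero:
  fixes z :: "nat \<Rightarrow> nat \<Rightarrow> complex"
  assumes "inj_on (\<lambda>(i, j). z i j) (I \<times> J)" "j \<in> J" "r \<in> I" "set ls \<subseteq> I - {r}"
  shows "(\<Prod>l\<leftarrow>ls. z r j - z l j) \<noteq> 0"
proof -
  have "z r j \<noteq> z l j" if "l \<in> set ls" for l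
    using assms that inj_onD[OF assms(1), of "(r, j)" "(l, j)"] by auto
  then show ?thesis by (auto simp: prod_list_zero_iff)
qed

text \<open>Apply \<open>clear_to_corner\<close> to \<open>\<rho>(S\<^sub>u)\<close>, \<open>u\<close> the subword of \<open>w\<close> from \<open>r\<close> to \<open>c - 1\<close>, with
  generators whose letters differ from \<open>w\<^sub>r\<close> resp. \<open>w\<^sub>c\<^sub>-\<^sub>1\<close>: then row \<open>r\<close> resp. column \<open>c\<close>
  is diagonal, and the corner entry is a product of coordinate differences.\<close>
lemma in_rho_range_corner_element:
  assumes "2 \<le> n" "set w \<subseteq> {1..n}" "\<delta> < 1"
    and inj: "inj_on (\<lambda>(i, j). z i j) ({1..length w + 1} \<times> {1..n})"
    and rc: "1 \<le> r" "r \<le> c" "c \<le> length w + 1"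
  obtains X where "in_rho_range \<delta> z n w X" "X r c \<noteq> 0"
    "\<And>a b. a \<in> {1..length w + 1} \<Longrightarrow> b \<in> {1..length w + 1} \<Longrightarrow> X a b \<noteq> 0 \<Longrightarrow> a \<le> r \<and> c \<le> b"
proof -
  define m where "m = length w + 1"
  define u where "u = take (c - r) (drop (r - 1) w)"
  define j1 where "j1 = (if w ! (r - 1) = 1 then 2 else 1 :: nat)"
  define j2 where "j2 = (if w ! (c - 2) = 1 then 2 else 1 :: nat)"
  have j1: "j1 \<in> {1..n}" "w ! (r - 1) \<noteq> j1" and j2: "j2 \<in> {1..n}" "w ! (c - 2) \<noteq> j2"
    using assms(1) by (auto simp: j1_def j2_def)
  define X where "X = clear_to_corner m (rho_S \<delta> z w j1) (rho_S \<delta> z w j2) r c (rho_word \<delta> z w u)"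
  have "set u \<subseteq> {1..n}"
    using assms(2) unfolding u_def by (meson order_trans set_drop_subset set_take_subset)
  then have "in_rho_range \<delta> z n w X"
    unfolding X_def clear_to_corner_def m_def using j1 j2
    by (intro in_rho_range_mul_shifts_right in_rho_range_mul_shifts_left in_rho_range_rho_word) auto
  moreover have "X r c \<noteq> 0"
  proof -
    have "rho_word \<delta> z w u r c = of_real (1 - \<delta>) ^ (c - r)"
      using rc rho_word_entry_band_edge[of r u w \<delta> z] by (simp add: u_def)
    moreover have "X r c = (\<Prod>l\<leftarrow>rev [1..<c]. z c j2 - z l j2) *
        (\<Prod>l\<leftarrow>[Suc r..<Suc m]. z r j1 - z l j1) * rho_word \<delta> z w u r c"
      unfolding X_def using rc j1 j2
      by (subst clear_to_corner_entry) (auto simp: m_def rho_S_row_off_diag rho_S_col_off_diag)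
    moreover have "(\<Prod>l\<leftarrow>[Suc r..<Suc m]. z r j1 - z l j1) \<noteq> 0"
      by (rule prod_list_coord_diff_nonzero[OF inj j1(1)]) (use rc in \<open>auto simp: m_def\<close>)
    moreover have "(\<Prod>l\<leftarrow>rev [1..<c]. z c j2 - z l j2) \<noteq> 0"
      by (rule prod_list_coord_diff_nonzero[OF inj j2(1)]) (use rc in auto)
    ultimately show ?thesis using assms(3) by simp
  qed
  moreover have "X a b = 0" if "a \<in> {1..m}" "b \<in> {1..m}" "\<not> (a \<le> r \<and> c \<le> b)" for a b
    unfolding X_def using that rc
    by (intro clear_to_corner_outside upper_tri_rho_S[of w, folded m_def]) (auto simp: m_def)
  ultimately show ?thesis using that unfolding m_def by blast
qed

definition mat_unit :: "nat \<Rightarrow> nat \<Rightarrow> cmat" where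
  "mat_unit r c i j = (if i = r \<and> j = c then 1 else 0)"

lemma sum_mat_unit:
  assumes "finite Q"
  shows "(\<Sum>p\<in>Q. f p * mat_unit (fst p) (snd p) i j) = (if (i, j) \<in> Q then f (i, j) else 0)"
proof -
  have "(\<Sum>p\<in>Q. f p * mat_unit (fst p) (snd p) i j) = (\<Sum>p\<in>Q. if p = (i, j) then f p else 0)"
    by (intro sum.cong) (auto simp: mat_unit_def)
  then show ?thesis using assms by (simp add: sum.delta')
qed

text \<open>Subtracting from \<open>X\<close> its other entries leaves a multiple of \<open>E\<^sub>r\<^sub>c\<close>.\<close>
lemma in_rho_range_mat_unit_of_entry:
  assumes X: "in_rho_range \<delta> z n w X" "X r c \<noteq> 0"
    and others: "\<And>a b. a \<in> {1..length w + 1} \<Longrightarrow> b \<in> {1..length w + 1} \<Longrightarrow> X a b \<noteq> 0 \<Longrightarrow>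
      (a, b) \<noteq> (r, c) \<Longrightarrow> in_rho_range \<delta> z n w (mat_unit a b)"
  shows "in_rho_range \<delta> z n w (mat_unit r c)"
proof -
  let ?I = "{1..length w + 1}"
  define Q where "Q = {p \<in> ?I \<times> ?I. X (fst p) (snd p) \<noteq> 0 \<and> p \<noteq> (r, c)}"
  have "finite Q" unfolding Q_def by (rule finite_subset[of _ "?I \<times> ?I"]) auto
  have "in_rho_range \<delta> z n w (mat_unit (fst p) (snd p))" if "p \<in> Q" for p
    using that unfolding Q_def by (intro others) auto
  then have "in_rho_range \<delta> z n w (\<lambda>i j. (1 / X r c) *
      (X i j + (- 1) * (\<Sum>p\<in>Q. X (fst p) (snd p) * mat_unit (fst p) (snd p) i j)))"
    using \<open>finite Q\<close> X(1) by (intro in_rho_range_scale in_rho_range_add in_rho_range_sum) auto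
  then show ?thesis
  proof (rule in_rho_range_cong)
    fix i j assume "i \<in> ?I" "j \<in> ?I"
    then show "(1 / X r c) * (X i j + (- 1) * (\<Sum>p\<in>Q. X (fst p) (snd p) * mat_unit (fst p) (snd p) i j))
      = mat_unit r c i j"
      using X(2) by (subst sum_mat_unit[OF \<open>finite Q\<close>]) (auto simp: Q_def mat_unit_def)
  qed
qed

lemma in_rho_range_mat_unit:
  assumes "2 \<le> n" "set w \<subseteq> {1..n}" "\<delta> < 1"
    and "inj_on (\<lambda>(i, j). z i j) ({1..length w + 1} \<times> {1..n})"
  shows "1 \<le> r \<Longrightarrow> r \<le> c \<Longrightarrow> c \<le> length w + 1 \<Longrightarrow> in_rho_range \<delta> z n w (mat_unit r c)"
proof (induction "length w + 1 - (c - r)" arbitrary: r c rule: less_induct)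
  case less
  obtain X where X: "in_rho_range \<delta> z n w X" "X r c \<noteq> 0"
    and supp: "\<And>a b. a \<in> {1..length w + 1} \<Longrightarrow> b \<in> {1..length w + 1} \<Longrightarrow> X a b \<noteq> 0 \<Longrightarrow> a \<le> r \<and> c \<le> b"
    using in_rho_range_corner_element[OF assms less.prems] by blast
  show ?case
  proof (rule in_rho_range_mat_unit_of_entry[OF X])
    fix a b assume "a \<in> {1..length w + 1}" "b \<in> {1..length w + 1}" "X a b \<noteq> 0" "(a, b) \<noteq> (r, c)"
    moreover from this have "a \<le> r" "c \<le> b" using supp by auto
    ultimately show "in_rho_range \<delta> z n w (mat_unit a b)"
      using less.prems by (intro less.hyps) auto
  qed
qed

lemma in_rho_range_iff_upper_tri:
  assumes "2 \<le> n" "set w \<subseteq> {1..n}" "\<delta> < 1"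
    and "inj_on (\<lambda>(i, j). z i j) ({1..length w + 1} \<times> {1..n})"
  shows "in_rho_range \<delta> z n w M \<longleftrightarrow> upper_tri (length w + 1) M"
proof
  assume upper: "upper_tri (length w + 1) M"
  let ?I = "{1..length w + 1}"
  define P where "P = {p \<in> ?I \<times> ?I. fst p \<le> snd p}"
  have "finite P" unfolding P_def by (rule finite_subset[of _ "?I \<times> ?I"]) auto
  then have "in_rho_range \<delta> z n w (\<lambda>i j. \<Sum>p\<in>P. M (fst p) (snd p) * mat_unit (fst p) (snd p) i j)"
    by (intro in_rho_range_sum in_rho_range_scale in_rho_range_mat_unit[OF assms]) (auto simp: P_def)
  then show "in_rho_range \<delta> z n w M"
  proof (rule in_rho_range_cong)
    fix i j assume "i \<in> ?I" "j \<in> ?I"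
    then show "(\<Sum>p\<in>P. M (fst p) (snd p) * mat_unit (fst p) (snd p) i j) = M i j"
      using upper unfolding upper_tri_def
      by (subst sum_mat_unit[OF \<open>finite P\<close>]) (auto simp: P_def)
  qed
qed (rule upper_tri_if_in_rho_range)

section \<open>Analyticity of the entries\<close>

definition monomial_at ::
  "(nat \<times> nat) set \<Rightarrow> (nat \<Rightarrow> nat \<Rightarrow> complex) \<Rightarrow> ((nat \<times> nat) \<Rightarrow> nat) \<Rightarrow> (nat \<Rightarrow> nat \<Rightarrow> complex) \<Rightarrow> complex"
  where "monomial_at I a \<alpha> z = (\<Prod>x\<in>I. (z (fst x) (snd x) - a (fst x) (snd x)) ^ \<alpha> x)"

definition polynomial_at ::
  "(nat \<times> nat) set \<Rightarrow> (nat \<Rightarrow> nat \<Rightarrow> complex) \<Rightarrow> ((nat \<Rightarrow> nat \<Rightarrow> complex) \<Rightarrow> complex) \<Rightarrow> bool"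
  where "polynomial_at I a F \<longleftrightarrow> (\<exists>S c. finite S \<and> (\<forall>\<alpha>\<in>S. \<forall>x. x \<notin> I \<longrightarrow> \<alpha> x = 0) \<and>
      (\<forall>z. F z = (\<Sum>\<alpha>\<in>S. c \<alpha> * monomial_at I a \<alpha> z)))"

lemma polynomial_at_const: "polynomial_at I a (\<lambda>z. k)"
  unfolding polynomial_at_def
  by (intro exI[of _ "{\<lambda>_. 0}"] exI[of _ "\<lambda>_. k"]) (simp add: monomial_at_def)

lemma polynomial_at_scale:
  assumes "polynomial_at I a F"
  shows "polynomial_at I a (\<lambda>z. k * F z)"
proof -
  obtain S c where "finite S" "\<forall>\<alpha>\<in>S. \<forall>x. x \<notin> I \<longrightarrow> \<alpha> x = 0"
    and "\<forall>z. F z = (\<Sum>\<alpha>\<in>S. c \<alpha> * monomial_at I a \<alpha> z)"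
    using assms unfolding polynomial_at_def by blast
  then show ?thesis
    unfolding polynomial_at_def
    by (intro exI[of _ S] exI[of _ "\<lambda>\<alpha>. k * c \<alpha>"]) (auto simp: sum_distrib_left mult.assoc)
qed

lemma polynomial_at_add:
  assumes "polynomial_at I a F" "polynomial_at I a G"
  shows "polynomial_at I a (\<lambda>z. F z + G z)"
proof -
  obtain S1 c1 where S1: "finite S1" "\<forall>\<alpha>\<in>S1. \<forall>x. x \<notin> I \<longrightarrow> \<alpha> x = 0"
    and F: "\<forall>z. F z = (\<Sum>\<alpha>\<in>S1. c1 \<alpha> * monomial_at I a \<alpha> z)"
    using assms(1) unfolding polynomial_at_def by blast
  obtain S2 c2 where S2: "finite S2" "\<forall>\<alpha>\<in>S2. \<forall>x. x \<notin> I \<longrightarrow> \<alpha> x = 0"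
    and G: "\<forall>z. G z = (\<Sum>\<alpha>\<in>S2. c2 \<alpha> * monomial_at I a \<alpha> z)"
    using assms(2) unfolding polynomial_at_def by blast
  define c where "c \<alpha> = (if \<alpha> \<in> S1 then c1 \<alpha> else 0) + (if \<alpha> \<in> S2 then c2 \<alpha> else 0)" for \<alpha>
  have "(\<Sum>\<alpha>\<in>S1 \<union> S2. c \<alpha> * monomial_at I a \<alpha> z) = F z + G z" for z
  proof -
    have "(\<Sum>\<alpha>\<in>S1 \<union> S2. c \<alpha> * monomial_at I a \<alpha> z)
      = (\<Sum>\<alpha>\<in>S1 \<union> S2. if \<alpha> \<in> S1 then c1 \<alpha> * monomial_at I a \<alpha> z else 0)
      + (\<Sum>\<alpha>\<in>S1 \<union> S2. if \<alpha> \<in> S2 then c2 \<alpha> * monomial_at I a \<alpha> z else 0)"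
      unfolding c_def sum.distrib[symmetric] by (intro sum.cong) (auto simp: distrib_right)
    then show ?thesis
      using S1(1) S2(1) F G by (simp add: sum.inter_restrict[symmetric] Int_absorb1 Int_absorb2)
  qed
  then show ?thesis
    unfolding polynomial_at_def using S1 S2 by (intro exI[of _ "S1 \<union> S2"] exI[of _ c]) auto
qed

lemma monomial_at_incr:
  assumes "finite I" "p \<in> I"
  shows "monomial_at I a (\<alpha>(p := Suc (\<alpha> p))) z =
    (z (fst p) (snd p) - a (fst p) (snd p)) * monomial_at I a \<alpha> z"
proof -
  let ?t = "\<lambda>x. z (fst x) (snd x) - a (fst x) (snd x)"
  have "(\<Prod>x\<in>I - {p}. ?t x ^ (\<alpha>(p := Suc (\<alpha> p))) x) = (\<Prod>x\<in>I - {p}. ?t x ^ \<alpha> x)"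
    by (intro prod.cong) auto
  then show ?thesis
    unfolding monomial_at_def using assms by (simp add: prod.remove[of I p] mult.assoc)
qed

lemma polynomial_at_mult_var:
  assumes "finite I" "p \<in> I" "polynomial_at I a F"
  shows "polynomial_at I a (\<lambda>z. z (fst p) (snd p) * F z)"
proof -
  obtain S c where S: "finite S" "\<forall>\<alpha>\<in>S. \<forall>x. x \<notin> I \<longrightarrow> \<alpha> x = 0"
    and F: "\<forall>z. F z = (\<Sum>\<alpha>\<in>S. c \<alpha> * monomial_at I a \<alpha> z)"
    using assms(3) unfolding polynomial_at_def by blast
  define incr where "incr \<alpha> = \<alpha>(p := Suc (\<alpha> p))" for \<alpha> :: "nat \<times> nat \<Rightarrow> nat"
  define decr where "decr \<beta> = \<beta>(p := \<beta> p - 1)" for \<beta> :: "nat \<times> nat \<Rightarrow> nat"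
  have decr_incr: "decr (incr \<alpha>) = \<alpha>" for \<alpha>
    by (simp add: decr_def incr_def)
  then have "inj_on incr S" by (metis inj_on_inverseI)
  have "(z (fst p) (snd p) - a (fst p) (snd p)) * F z = (\<Sum>\<beta>\<in>incr ` S. (c \<circ> decr) \<beta> * monomial_at I a \<beta> z)"
    for z
  proof -
    have "(z (fst p) (snd p) - a (fst p) (snd p)) * F z = (\<Sum>\<alpha>\<in>S. c \<alpha> * monomial_at I a (incr \<alpha>) z)"
      using assms(1,2) by (simp add: F sum_distrib_left monomial_at_incr incr_def mult.left_commute)
    also have "\<dots> = (\<Sum>\<beta>\<in>incr ` S. (c \<circ> decr) \<beta> * monomial_at I a \<beta> z)"
      using \<open>inj_on incr S\<close> by (simp add: sum.reindex decr_incr)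
    finally show ?thesis .
  qed
  moreover have "\<forall>\<beta>\<in>incr ` S. \<forall>x. x \<notin> I \<longrightarrow> \<beta> x = 0"
    using S(2) assms(2) by (auto simp: incr_def)
  ultimately have "polynomial_at I a (\<lambda>z. (z (fst p) (snd p) - a (fst p) (snd p)) * F z)"
    unfolding polynomial_at_def using S(1) by blast
  then have "polynomial_at I a (\<lambda>z. (z (fst p) (snd p) - a (fst p) (snd p)) * F z + a (fst p) (snd p) * F z)"
    by (intro polynomial_at_add polynomial_at_scale assms(3))
  then show ?thesis by (simp add: algebra_simps)
qed

text \<open>A polynomial is its own (finite) Taylor series around every point.\<close>
lemma analytic_several_if_polynomial_at:
  assumes "\<And>a. a \<in> D \<Longrightarrow> polynomial_at I a F"
  shows "analytic_several I D F"
  unfolding analytic_several_def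
proof (intro ballI)
  fix a assume "a \<in> D"
  then have "polynomial_at I a F" by (rule assms)
  then obtain S c where S: "finite S" "\<forall>\<alpha>\<in>S. \<forall>x. x \<notin> I \<longrightarrow> \<alpha> x = 0"
    and F: "\<forall>z. F z = (\<Sum>\<alpha>\<in>S. c \<alpha> * monomial_at I a \<alpha> z)"
    unfolding polynomial_at_def by blast
  define c' where "c' \<alpha> = (if \<alpha> \<in> S then c \<alpha> else 0)" for \<alpha>
  define T where "T = {\<alpha>. \<forall>x. x \<notin> I \<longrightarrow> \<alpha> x = (0::nat)}"
  have sums: "((\<lambda>\<alpha>. c' \<alpha> * monomial_at I a \<alpha> z) has_sum F z) T" for z
  proof (rule has_sum_finite_neutralI[OF S(1)])
    show "S \<subseteq> T" using S(2) unfolding T_def by blast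
    show "c' \<alpha> * monomial_at I a \<alpha> z = 0" if "\<alpha> \<in> T - S" for \<alpha>
      using that unfolding c'_def by simp
    have "(\<Sum>\<alpha>\<in>S. c' \<alpha> * monomial_at I a \<alpha> z) = (\<Sum>\<alpha>\<in>S. c \<alpha> * monomial_at I a \<alpha> z)"
      unfolding c'_def by (intro sum.cong) auto
    then show "F z = (\<Sum>\<alpha>\<in>S. c' \<alpha> * monomial_at I a \<alpha> z)" using F by simp
  qed
  show "\<exists>e>0. \<exists>c. \<forall>z\<in>D. (\<forall>x\<in>I. cmod (z (fst x) (snd x) - a (fst x) (snd x)) < e) \<longrightarrow>
      ((\<lambda>\<alpha>. c \<alpha> * (\<Prod>x\<in>I. (z (fst x) (snd x) - a (fst x) (snd x)) ^ \<alpha> x)) has_sum F z)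
        {\<alpha>. \<forall>x. x \<notin> I \<longrightarrow> \<alpha> x = 0}"
  proof (intro exI[of _ "1::real"] conjI exI[of _ c'] ballI impI)
    fix z show "((\<lambda>\<alpha>. c' \<alpha> * (\<Prod>x\<in>I. (z (fst x) (snd x) - a (fst x) (snd x)) ^ \<alpha> x)) has_sum F z)
        {\<alpha>. \<forall>x. x \<notin> I \<longrightarrow> \<alpha> x = 0}"
      using sums[of z] unfolding T_def monomial_at_def .
  qed simp
qed

lemma polynomial_at_rho_word_entry:
  "set v \<subseteq> {1..n} \<Longrightarrow> r \<in> {1..length w + 1} \<Longrightarrow>
   polynomial_at ({1..length w + 1} \<times> {1..n}) a (\<lambda>z. rho_word \<delta> z w v r c)"
proof (induction v arbitrary: r)
  case Nil then show ?case by (simp add: rho_word_Nil polynomial_at_const)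
next
  case (Cons j v)
  let ?I = "{1..length w + 1} \<times> {1..n}"
  have "polynomial_at ?I a (\<lambda>z. z r j * rho_word \<delta> z w v r c)"
    using polynomial_at_mult_var[of ?I "(r, j)"] Cons by simp
  moreover have "polynomial_at ?I a (\<lambda>z. if r \<le> length w \<and> w ! (r - 1) = j
      then of_real (1 - \<delta>) * rho_word \<delta> z w v (Suc r) c else 0)"
  proof (cases "r \<le> length w \<and> w ! (r - 1) = j")
    case True
    then show ?thesis using Cons by (auto intro: polynomial_at_scale Cons.IH)
  next
    case False
    then show ?thesis by (simp only: if_False polynomial_at_const)
  qed
  ultimately show ?case
    using Cons.prems by (simp add: rho_word_Cons_entry polynomial_at_add)
qed

lemma analytic_several_rho_word_entry:
  "set v \<subseteq> {1..n} \<Longrightarrow> r \<in> {1..length w + 1} \<Longrightarrow>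
   analytic_several ({1..length w + 1} \<times> {1..n}) D (\<lambda>z. rho_word \<delta> z w v r c)"
  by (intro analytic_several_if_polynomial_at polynomial_at_rho_word_entry)

theorem lemma4p3:
  fixes n :: nat and w :: "nat list" and \<delta> :: real
  assumes "n \<ge> 2" and "length w \<ge> 2" and "set w \<subseteq> {1..n}"
    and "0 \<le> \<delta>" and "\<delta> < 1"
  shows
    "(\<forall>z \<in> scaled_polyball \<delta> n (length w + 1).
        rho_word \<delta> z w w 1 (length w + 1) = complex_of_real ((1 - \<delta>) ^ length w)
      \<and> (\<forall>v. set v \<subseteq> {1..n} \<and> length v \<le> length w \<and> v \<noteq> w \<longrightarrow>
             rho_word \<delta> z w v 1 (length w + 1) = 0))
     \<and> (\<forall>v. set v \<subseteq> {1..n} \<and> length v > length w \<longrightarrow>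
          (\<exists>F. analytic_several ({1..length w + 1} \<times> {1..n})
                  (scaled_polyball \<delta> n (length w + 1)) F
             \<and> F (\<lambda>_ _. 0) = 0
             \<and> (\<forall>z \<in> scaled_polyball \<delta> n (length w + 1).
                  rho_word \<delta> z w v 1 (length w + 1) = F z)))
     \<and> (\<forall>z \<in> scaled_polyball \<delta> n (length w + 1).
          inj_on (\<lambda>(i, j). z i j) ({1..length w + 1} \<times> {1..n}) \<longrightarrow>
            (\<forall>M. in_rho_range \<delta> z n w M \<longleftrightarrow> upper_tri (length w + 1) M)
          \<and> (\<forall>i \<in> {1..length w + 1}. \<forall>j \<in> {1..n}. rho_S \<delta> z w j i i = z i j))"
proof (intro conjI ballI allI impI)
  fix z
  show "rho_word \<delta> z w w 1 (length w + 1) = complex_of_real ((1 - \<delta>) ^ length w)"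
    using rho_word_corner_short[of w w \<delta> z] by (simp add: of_real_power)
  show "rho_word \<delta> z w v 1 (length w + 1) = 0"
    if "set v \<subseteq> {1..n} \<and> length v \<le> length w \<and> v \<noteq> w" for v
    using that rho_word_corner_short[of v w \<delta> z] by simp
  show "in_rho_range \<delta> z n w M \<longleftrightarrow> upper_tri (length w + 1) M"
    if "inj_on (\<lambda>(i, j). z i j) ({1..length w + 1} \<times> {1..n})" for M
    by (rule in_rho_range_iff_upper_tri[OF assms(1,3,5) that])
  show "rho_S \<delta> z w j i i = z i j" for i j
    by simp
next
  fix v :: "nat list" assume v: "set v \<subseteq> {1..n} \<and> length v > length w"
  show "\<exists>F. analytic_several ({1..length w + 1} \<times> {1..n}) (scaled_polyball \<delta> n (length w + 1)) F
      \<and> F (\<lambda>_ _. 0) = 0 \<and> (\<forall>z \<in> scaled_polyball \<delta> n (length w + 1). rho_word \<delta> z w v 1 (length w + 1) = F z)"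
    using v by (intro exI[of _ "\<lambda>z. rho_word \<delta> z w v 1 (length w + 1)"] conjI ballI refl
        analytic_several_rho_word_entry rho_word_entry_at_zero) auto
qed

end
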